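(* There exists a character $\varepsilon:G_3\to\{1,-1\}$ such that $\varepsilon(g)=-1$ for every hexflection $g$ and $\varepsilon(-I)=-1$.
   Context: $\zeta=(-1+\sqrt{-3})/2$, $\mathcal{E}=\mathbb{Z}[\zeta]$. On $\mathbb{C}^4$, $h(a,b)=\bar a_1b_2+\bar a_2b_1-\bar a_3b_3-\bar a_4b_4$; $G_3=\{g\in\mathrm{GL}(4,\mathcal{E}):h(ga,gb)=h(a,b)\}$. For $b\in\mathcal{E}^4$ with $h(b,b)=-1$ and $\eta$ a primitive sixth root of unity, the hexflection along $b$ is $x\mapsto x-(1-\eta)\frac{h(b,x)}{h(b,b)}b$, an element of $G_3$ of order $6$ fixing the orthogonal complement of $b$ and sending $b$ to $\eta b$. *)

theory Defs
  imports "HOL-Analysis.Analysis"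
begin

definition zeta3 :: complex where
  "zeta3 = Complex (-1/2) (sqrt 3 / 2)"

definition Eis :: "complex set" where
  "Eis = {of_int a + of_int b * zeta3 | a b. True}"

definition herm :: "complex^4 \<Rightarrow> complex^4 \<Rightarrow> complex" where
  "herm a b = cnj (a$1) * b$2 + cnj (a$2) * b$1 - cnj (a$3) * b$3 - cnj (a$4) * b$4"

definition GL4E :: "(complex^4^4) set" where
  "GL4E = {g. (\<forall>i j. g$i$j \<in> Eis) \<and> invertible g \<and> (\<forall>i j. matrix_inv g $i$j \<in> Eis)}"

definition G3 :: "(complex^4^4) set" where
  "G3 = {g \<in> GL4E. \<forall>a b. herm (g *v a) (g *v b) = herm a b}"

definition primitive_sixth_root :: "complex \<Rightarrow> bool" where
  "primitive_sixth_root \<eta> \<longleftrightarrow> \<eta> ^ 6 = 1 \<and> (\<forall>k::nat. 0 < k \<and> k < 6 \<longrightarrow> \<eta> ^ k \<noteq> 1)"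

definition hexflection :: "complex^4^4 \<Rightarrow> bool" where
  "hexflection g \<longleftrightarrow> (\<exists>b \<eta>. (\<forall>i. b$i \<in> Eis) \<and> herm b b = -1 \<and> primitive_sixth_root \<eta> \<and>
      (\<forall>x. g *v x = x - ((1 - \<eta>) * herm b x / herm b b) *s b))"

end

theory Submission
  imports Defs "HOL-Combinatorics.Permutations" "HOL-Library.Numeral_Type"
begin

text \<open>Reduction modulo \<open>\<theta> = \<surd>-3\<close> maps \<E> onto \<open>\<E>/\<theta>\<E> = F\<^sub>3\<close>, turns h into a symmetric
  bilinear form on \<open>F\<^sub>3\<^sup>4\<close>, and turns every element of \<open>G\<^sub>3\<close> into an isometry of it. Hence
  \<open>G\<^sub>3\<close> permutes the 30 vectors of norm \<open>-1\<close> in \<open>F\<^sub>3\<^sup>4\<close>, and \<open>\<epsilon>(g)\<close> is the sign of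
  this permutation. A hexflection along b reduces to the reflection in the image of b, an
  involution moving exactly the 18 vectors not orthogonal to it, i.e. a product of 9
  transpositions; \<open>-I\<close> acts as \<open>v \<mapsto> -v\<close>, a product of 15 transpositions.\<close>

section \<open>Reduction of Eisenstein integers modulo \<open>\<surd>-3\<close>\<close>

lemma zeta3_sq: "zeta3 * zeta3 = -1 - zeta3"
  by (simp add: zeta3_def complex_eq_iff)

lemma cnj_zeta3: "cnj zeta3 = -1 - zeta3"
  by (simp add: zeta3_def complex_eq_iff)

lemma three_eq_zero [simp]: "(3 :: 3) = 0"
  by simp

text \<open>For \<open>z = a + b\<zeta>\<close> one has \<open>Re z + \<surd>3 Im z = a + b\<close>; since \<open>\<zeta> \<equiv> 1\<close> modulo
  \<open>\<surd>-3 = 1 + 2\<zeta>\<close>, this is the reduction map \<open>\<E> \<rightarrow> \<E>/\<surd>-3 \<E> = F\<^sub>3\<close>.\<close>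

definition eis_red :: "complex \<Rightarrow> 3" where
  "eis_red z = of_int \<lfloor>Re z + sqrt 3 * Im z\<rfloor>"

lemma eis_red_eq: "eis_red (of_int a + of_int b * zeta3) = of_int (a + b)"
proof -
  have "Re (of_int a + of_int b * zeta3) + sqrt 3 * Im (of_int a + of_int b * zeta3) = of_int (a + b)"
    by (simp add: zeta3_def field_simps)
  then show ?thesis
    unfolding eis_red_def by (metis floor_of_int)
qed

lemma EisI: "of_int a + of_int b * zeta3 \<in> Eis"
  unfolding Eis_def by blast

lemma EisE:
  assumes "z \<in> Eis"
  obtains a b where "z = of_int a + of_int b * zeta3"
  using assms unfolding Eis_def by blast

lemma Eis_of_int: "of_int n \<in> Eis"
  using EisI[of n 0] by simp

lemma eis_red_of_int [simp]: "eis_red (of_int n) = of_int n"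
  using eis_red_eq[of n 0] by simp

lemma eis_add_eq:
  "(of_int a + of_int b * zeta3) + (of_int c + of_int d * zeta3) =
     of_int (a + c) + of_int (b + d) * zeta3"
  by (simp add: algebra_simps)

lemma eis_mult_eq:
  "(of_int a + of_int b * zeta3) * (of_int c + of_int d * zeta3) =
     of_int (a * c - b * d) + of_int (a * d + b * c - b * d) * zeta3"
proof -
  have "(of_int a + of_int b * zeta3) * (of_int c + of_int d * zeta3) =
     of_int a * of_int c + (of_int a * of_int d + of_int b * of_int c) * zeta3
       + of_int b * of_int d * (zeta3 * zeta3)"
    by (simp add: algebra_simps)
  then show ?thesis
    by (simp add: zeta3_sq algebra_simps)
qed

lemma eis_uminus_eq: "- (of_int a + of_int b * zeta3) = of_int (- a) + of_int (- b) * zeta3"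
  by simp

lemma eis_cnj_eq: "cnj (of_int a + of_int b * zeta3) = of_int (a - b) + of_int (- b) * zeta3"
  by (simp add: cnj_zeta3 algebra_simps)

lemma Eis_add: "z \<in> Eis \<Longrightarrow> w \<in> Eis \<Longrightarrow> z + w \<in> Eis"
  by (elim EisE) (simp only: eis_add_eq EisI)

lemma Eis_mult: "z \<in> Eis \<Longrightarrow> w \<in> Eis \<Longrightarrow> z * w \<in> Eis"
  by (elim EisE) (simp only: eis_mult_eq EisI)

lemma Eis_uminus: "z \<in> Eis \<Longrightarrow> - z \<in> Eis"
  by (elim EisE) (simp only: eis_uminus_eq EisI)

lemma Eis_diff: "z \<in> Eis \<Longrightarrow> w \<in> Eis \<Longrightarrow> z - w \<in> Eis"
  by (metis Eis_add Eis_uminus diff_conv_add_uminus)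

lemma Eis_cnj: "z \<in> Eis \<Longrightarrow> cnj z \<in> Eis"
  by (elim EisE) (simp only: eis_cnj_eq EisI)

lemma Eis_sum: "(\<And>i. i \<in> S \<Longrightarrow> f i \<in> Eis) \<Longrightarrow> sum f S \<in> Eis"
  by (induction S rule: infinite_finite_induct) (auto simp: Eis_add Eis_of_int[of 0, simplified])

lemma eis_red_add: "z \<in> Eis \<Longrightarrow> w \<in> Eis \<Longrightarrow> eis_red (z + w) = eis_red z + eis_red w"
proof (elim EisE)
  fix a b c d
  assume z: "z = of_int a + of_int b * zeta3" and w: "w = of_int c + of_int d * zeta3"
  show ?thesis
    unfolding z w eis_add_eq eis_red_eq by simp
qed

lemma eis_red_mult: "z \<in> Eis \<Longrightarrow> w \<in> Eis \<Longrightarrow> eis_red (z * w) = eis_red z * eis_red w"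
proof (elim EisE)
  fix a b c d
  assume z: "z = of_int a + of_int b * zeta3" and w: "w = of_int c + of_int d * zeta3"
  have coeff: "a * c - b * d + (a * d + b * c - b * d) = (a + b) * (c + d) - 3 * (b * d)"
    by (simp add: algebra_simps)
  show ?thesis
    unfolding z w eis_mult_eq eis_red_eq coeff by simp
qed

lemma eis_red_uminus:
  assumes "z \<in> Eis"
  shows "eis_red (- z) = - eis_red z"
proof -
  have "eis_red (- z) + eis_red z = eis_red 0"
    using eis_red_add[OF Eis_uminus[OF assms] assms] by simp
  then show ?thesis
    using eis_red_of_int[of 0] by (simp add: eq_neg_iff_add_eq_0)
qed

lemma eis_red_diff: "z \<in> Eis \<Longrightarrow> w \<in> Eis \<Longrightarrow> eis_red (z - w) = eis_red z - eis_red w"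
  by (metis Eis_uminus diff_conv_add_uminus eis_red_add eis_red_uminus)

lemma eis_red_cnj: "z \<in> Eis \<Longrightarrow> eis_red (cnj z) = eis_red z"
proof (elim EisE)
  fix a b
  assume z: "z = of_int a + of_int b * zeta3"
  have coeff: "a - b + - b = a + b - 3 * b"
    by simp
  show ?thesis
    unfolding z eis_cnj_eq eis_red_eq coeff by simp
qed

lemma eis_red_sum: "(\<And>i. i \<in> S \<Longrightarrow> f i \<in> Eis) \<Longrightarrow> eis_red (sum f S) = (\<Sum>i\<in>S. eis_red (f i))"
proof (induction S rule: infinite_finite_induct)
  case (insert x S)
  then show ?case
    by (simp add: eis_red_add Eis_sum)
qed (use eis_red_of_int[of 0] in simp_all)

definition eis_red_vec :: "complex^'n \<Rightarrow> 3^'n" where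
  "eis_red_vec x = (\<chi> i. eis_red (x $ i))"

definition eis_red_mat :: "complex^'n^'m \<Rightarrow> 3^'n^'m" where
  "eis_red_mat g = (\<chi> i j. eis_red (g $ i $ j))"

lemma Eis_mat_vec:
  assumes "\<forall>i j. g $ i $ j \<in> Eis" and "\<forall>j. x $ j \<in> Eis"
  shows "(g *v x) $ i \<in> Eis"
  unfolding matrix_vector_mult_def using assms by (simp add: Eis_sum Eis_mult)

lemma eis_red_mat_vec:
  assumes "\<forall>i j. g $ i $ j \<in> Eis" and "\<forall>j. x $ j \<in> Eis"
  shows "eis_red_vec (g *v x) = eis_red_mat g *v eis_red_vec x"
  using assms
  by (simp add: vec_eq_iff eis_red_vec_def eis_red_mat_def matrix_vector_mult_def
      eis_red_sum Eis_mult eis_red_mult)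

lemma eis_red_mat_mult:
  assumes "\<forall>i j. g $ i $ j \<in> Eis" and "\<forall>i j. h $ i $ j \<in> Eis"
  shows "eis_red_mat (g ** h) = eis_red_mat g ** eis_red_mat h"
  using assms
  by (simp add: vec_eq_iff eis_red_mat_def matrix_matrix_mult_def
      eis_red_sum Eis_mult eis_red_mult)

lemma eis_red_mat_of_int: "eis_red_mat (mat (of_int k)) = mat (of_int k)"
  by (simp add: vec_eq_iff eis_red_mat_def mat_def eis_red_of_int[of 0, simplified])

lemma of_int_Rep_bit1: "of_int (Rep_bit1 c) = (c :: 'a::finite bit1)"
  by (simp only: bit1.of_int_eq bit1.Rep_mod bit1.Rep_inverse)

lemma eis_red_vec_surj: "\<exists>x. (\<forall>i. x $ i \<in> Eis) \<and> eis_red_vec x = (v :: 3^'n)"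
proof (intro exI conjI allI)
  let ?x = "(\<chi> i. of_int (Rep_bit1 (v $ i))) :: complex^'n"
  show "?x $ i \<in> Eis" for i
    by (simp add: Eis_of_int)
  show "eis_red_vec ?x = v"
    by (simp add: vec_eq_iff eis_red_vec_def of_int_Rep_bit1)
qed

definition herm_red :: "3^4 \<Rightarrow> 3^4 \<Rightarrow> 3" where
  "herm_red v w = v$1 * w$2 + v$2 * w$1 - v$3 * w$3 - v$4 * w$4"

lemma Eis_herm:
  assumes "\<forall>i. x $ i \<in> Eis" and "\<forall>i. y $ i \<in> Eis"
  shows "herm x y \<in> Eis"
  unfolding herm_def using assms by (simp add: Eis_add Eis_diff Eis_mult Eis_cnj)

lemma eis_red_herm:
  assumes "\<forall>i. x $ i \<in> Eis" and "\<forall>i. y $ i \<in> Eis"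
  shows "eis_red (herm x y) = herm_red (eis_red_vec x) (eis_red_vec y)"
  unfolding herm_def herm_red_def eis_red_vec_def using assms
  by (simp add: Eis_add Eis_diff Eis_mult Eis_cnj eis_red_add eis_red_diff eis_red_mult eis_red_cnj)

lemma herm_red_uminus: "herm_red (- v) (- v) = herm_red v v"
  by (simp add: herm_red_def)

lemma herm_red_diff_scale:
  "herm_red b (v - c *s w) = herm_red b v - c * herm_red b w"
  by (simp add: herm_red_def algebra_simps)

section \<open>The permutation of the vectors of norm \<open>-1\<close>\<close>

lemma G3_Eis: "g \<in> G3 \<Longrightarrow> \<forall>i j. g $ i $ j \<in> Eis"
  unfolding G3_def GL4E_def by blast

lemma G3_matrix_inv:
  assumes "g \<in> G3"
  shows "\<forall>i j. matrix_inv g $ i $ j \<in> Eis" and "matrix_inv g ** g = mat 1"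
proof -
  have "g \<in> GL4E"
    using assms unfolding G3_def by blast
  then show "\<forall>i j. matrix_inv g $ i $ j \<in> Eis"
    unfolding GL4E_def by blast
  have "invertible g"
    using \<open>g \<in> GL4E\<close> unfolding GL4E_def by blast
  then have "g ** matrix_inv g = mat 1 \<and> matrix_inv g ** g = mat 1"
    unfolding invertible_def matrix_inv_def by (rule someI_ex)
  then show "matrix_inv g ** g = mat 1"
    by blast
qed

lemma herm_red_G3:
  assumes "g \<in> G3"
  shows "herm_red (eis_red_mat g *v v) (eis_red_mat g *v w) = herm_red v w"
proof -
  obtain x y where x: "\<forall>i. x $ i \<in> Eis" "eis_red_vec x = v"
    and y: "\<forall>i. y $ i \<in> Eis" "eis_red_vec y = w"
    using eis_red_vec_surj by metis
  have g: "\<forall>i j. g $ i $ j \<in> Eis"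
    using G3_Eis[OF assms] .
  have "herm_red (eis_red_mat g *v v) (eis_red_mat g *v w) = eis_red (herm (g *v x) (g *v y))"
    using x y g by (simp add: eis_red_herm Eis_mat_vec eis_red_mat_vec)
  also have "\<dots> = eis_red (herm x y)"
    using assms unfolding G3_def by simp
  also have "\<dots> = herm_red v w"
    using x y by (simp add: eis_red_herm)
  finally show ?thesis .
qed

definition neg_norm_vecs :: "(3^4) set" where
  "neg_norm_vecs = {v. herm_red v v = -1}"

definition red_perm :: "complex^4^4 \<Rightarrow> 3^4 \<Rightarrow> 3^4" where
  "red_perm g v = (if v \<in> neg_norm_vecs then eis_red_mat g *v v else v)"

lemma G3_maps_neg_norm_vecs: "g \<in> G3 \<Longrightarrow> v \<in> neg_norm_vecs \<Longrightarrow> eis_red_mat g *v v \<in> neg_norm_vecs"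
  unfolding neg_norm_vecs_def by (simp add: herm_red_G3)

lemma red_perm_mult:
  assumes "g \<in> G3" and "h \<in> G3"
  shows "red_perm (g ** h) = red_perm g \<circ> red_perm h"
proof
  fix v
  have "eis_red_mat (g ** h) *v v = eis_red_mat g *v (eis_red_mat h *v v)"
    using G3_Eis assms by (simp add: eis_red_mat_mult matrix_vector_mul_assoc)
  then show "red_perm (g ** h) v = (red_perm g \<circ> red_perm h) v"
    unfolding red_perm_def using G3_maps_neg_norm_vecs[OF assms(2)] by simp
qed

lemma permutation_restrict:
  assumes "finite S" and "f ` S \<subseteq> S" and "inj_on f S"
  shows "permutation (\<lambda>x. if x \<in> S then f x else x)"
proof -
  let ?p = "\<lambda>x. if x \<in> S then f x else x"
  have "bij_betw f S S"
    using endo_inj_surj[OF assms] assms(3) by (simp add: bij_betw_def)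
  then have "bij_betw ?p S S"
    by (rule bij_betw_cong[THEN iffD1, rotated]) simp
  then have "?p permutes S"
    by (rule bij_imp_permutes) simp
  then show ?thesis
    using assms(1) permutation_permutes by blast
qed

lemma permutation_red_perm:
  assumes "g \<in> G3"
  shows "permutation (red_perm g)"
proof -
  have "eis_red_mat (matrix_inv g) ** eis_red_mat g = mat 1"
    using G3_matrix_inv[OF assms] G3_Eis[OF assms] eis_red_mat_of_int[of 1]
    by (simp add: eis_red_mat_mult[symmetric])
  then have "inj ((*v) (eis_red_mat g))"
    by (metis inj_on_inverseI matrix_vector_mul_assoc matrix_vector_mul_lid)
  moreover have "(*v) (eis_red_mat g) ` neg_norm_vecs \<subseteq> neg_norm_vecs"
    using G3_maps_neg_norm_vecs[OF assms] by blast
  ultimately show ?thesis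
    unfolding red_perm_def[abs_def] by (intro permutation_restrict) (auto intro: inj_on_subset)
qed

section \<open>Signs of involutions\<close>

lemma permutation_involution:
  assumes "finite {x. p x \<noteq> x}" and "p \<circ> p = id"
  shows "permutation p"
  using assms o_bij unfolding permutation by blast

lemma involution_transpose_comp:
  assumes inv: "p \<circ> p = id" and a: "p a \<noteq> a"
  defines "q \<equiv> Transposition.transpose a (p a) \<circ> p"
  shows "q \<circ> q = id" and "{x. q x \<noteq> x} = {x. p x \<noteq> x} - {a, p a}"
proof -
  have pp: "p (p x) = x" for x
    using inv by (simp add: pointfree_idE)
  have q_other: "q x = p x" if "x \<noteq> a" "x \<noteq> p a" for x
    using that pp unfolding q_def by (metis comp_apply transpose_apply_other)
  have q_a: "q a = a" and q_pa: "q (p a) = p a"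
    unfolding q_def using pp by simp_all
  show "q \<circ> q = id"
  proof
    fix x
    show "(q \<circ> q) x = id x"
      using q_a q_pa q_other pp by (cases "x = a \<or> x = p a") (auto, metis)
  qed
  show "{x. q x \<noteq> x} = {x. p x \<noteq> x} - {a, p a}"
    using q_a q_pa q_other a pp by (auto, metis)
qed

lemma sign_involution:
  assumes "finite {x. p x \<noteq> x}" and "p \<circ> p = id"
  shows "sign p = (-1) ^ (card {x. p x \<noteq> x} div 2)"
  using assms
proof (induction "card {x. p x \<noteq> x}" arbitrary: p rule: less_induct)
  case less
  show ?case
  proof (cases "\<exists>a. p a \<noteq> a")
    case False
    then have "p = id"
      by auto
    then show ?thesis
      by simp
  next
    case True
    then obtain a where a: "p a \<noteq> a"
      by blast
    define q where "q = Transposition.transpose a (p a) \<circ> p"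
    have q: "q \<circ> q = id" "{x. q x \<noteq> x} = {x. p x \<noteq> x} - {a, p a}"
      using involution_transpose_comp[OF less.prems(2) a] unfolding q_def by blast+
    have ab: "{a, p a} \<subseteq> {x. p x \<noteq> x}" "card {a, p a} = 2"
      using a less.prems(2) by (auto simp: pointfree_idE)
    then have card_q: "card {x. q x \<noteq> x} + 2 = card {x. p x \<noteq> x}"
      using q(2) less.prems(1) card_Diff_subset card_mono[OF less.prems(1) ab(1)] by auto
    have fin_q: "finite {x. q x \<noteq> x}"
      using q(2) less.prems(1) by simp
    have "Transposition.transpose a (p a) \<circ> q = p"
      unfolding q_def by (simp add: fun_eq_iff)
    then have "sign p = sign (Transposition.transpose a (p a)) * sign q"
      using sign_compose[OF permutation_swap_id permutation_involution[OF fin_q q(1)]] by metis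
    also have "\<dots> = - sign q"
      using a by (simp add: sign_swap_id)
    also have "\<dots> = - ((-1) ^ (card {x. q x \<noteq> x} div 2))"
      using less.hyps[of q] card_q fin_q q(1) by simp
    also have "\<dots> = (-1) ^ (card {x. p x \<noteq> x} div 2)"
      using card_q[symmetric] by simp
    finally show ?thesis .
  qed
qed

lemma sign_restricted_involution:
  assumes "finite S" and "\<And>v. v \<in> S \<Longrightarrow> f v \<in> S \<and> f (f v) = v"
  shows "sign (\<lambda>v. if v \<in> S then f v else v) = (-1) ^ (card {v \<in> S. f v \<noteq> v} div 2)"
proof -
  let ?p = "\<lambda>v. if v \<in> S then f v else v"
  have "{v. ?p v \<noteq> v} = {v \<in> S. f v \<noteq> v}"
    by auto
  moreover have "?p \<circ> ?p = id"
    using assms(2) by (auto simp: fun_eq_iff)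
  ultimately show ?thesis
    using sign_involution[of ?p] assms(1) by simp
qed

section \<open>Counting vectors of norm \<open>-1\<close>\<close>

lemma of_int_eq_iff_mod3: "(of_int x :: 3) = of_int y \<longleftrightarrow> x mod 3 = y mod 3"
proof -
  have "(of_int x :: 3) = of_int y \<longleftrightarrow> Rep_bit1 (of_int x :: 3) = Rep_bit1 (of_int y :: 3)"
    by (simp add: bit1.Rep_inject_sym)
  also have "\<dots> \<longleftrightarrow> x mod 3 = y mod 3"
    using bit1.Rep_Abs_mod[where ?'a = 1] by (simp add: bit1.of_int_eq)
  finally show ?thesis .
qed

lemma Rep_bit1_3_range: "Rep_bit1 (c :: 3) \<in> {0..2}"
  using Rep_bit1[of c] by simp

lemma of_int_inj_3: "a \<in> {0..2} \<Longrightarrow> b \<in> {0..2} \<Longrightarrow> (of_int a :: 3) = of_int b \<longleftrightarrow> a = b"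
  by (simp add: of_int_eq_iff_mod3)

text \<open>The counts in \<open>F\<^sub>3\<^sup>4\<close> are evaluated on integer tuples, because code evaluation does
  not compute with the abstract representation of the type \<open>3\<close>.\<close>

definition residue_tuples :: "(int \<times> int \<times> int \<times> int) list" where
  "residue_tuples = List.product [0..2] (List.product [0..2] (List.product [0..2] [0..2]))"

definition vec_of_tuple :: "int \<times> int \<times> int \<times> int \<Rightarrow> 3^4" where
  "vec_of_tuple t = (case t of (a, b, c, d) \<Rightarrow>
     \<chi> i. of_int (if i = 1 then a else if i = 2 then b else if i = 3 then c else d))"

lemma set_residue_tuples: "set residue_tuples = {0..2} \<times> {0..2} \<times> {0..2} \<times> {0..2}"
  unfolding residue_tuples_def by simp

fun herm_int :: "int \<times> int \<times> int \<times> int \<Rightarrow> int \<times> int \<times> int \<times> int \<Rightarrow> int" where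
  "herm_int (a, b, c, d) (x, y, z, w) = a * y + b * x - c * z - d * w"

lemma herm_red_vec_of_tuple: "herm_red (vec_of_tuple s) (vec_of_tuple t) = of_int (herm_int s t)"
  by (cases s; cases t) (simp add: herm_red_def vec_of_tuple_def)

lemma bij_betw_vec_of_tuple: "bij_betw vec_of_tuple (set residue_tuples) UNIV"
proof (rule bij_betwI')
  fix s t
  assume "s \<in> set residue_tuples" "t \<in> set residue_tuples"
  then show "vec_of_tuple s = vec_of_tuple t \<longleftrightarrow> s = t"
    unfolding set_residue_tuples
    by (cases s; cases t) (simp add: vec_of_tuple_def vec_eq_iff forall_4 of_int_inj_3)
next
  fix v :: "3^4"
  let ?t = "(Rep_bit1 (v$1), Rep_bit1 (v$2), Rep_bit1 (v$3), Rep_bit1 (v$4))"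
  have "?t \<in> set residue_tuples"
    using Rep_bit1_3_range unfolding set_residue_tuples by blast
  moreover have "v = vec_of_tuple ?t"
    by (simp add: vec_of_tuple_def vec_eq_iff forall_4 of_int_Rep_bit1)
  ultimately show "\<exists>t \<in> set residue_tuples. v = vec_of_tuple t"
    by blast
qed simp

lemma card_via_residue_tuples:
  "card {v. P v} = length (filter (\<lambda>t. P (vec_of_tuple t)) residue_tuples)"
proof -
  have "distinct residue_tuples"
    unfolding residue_tuples_def by (simp add: distinct_product)
  have "bij_betw vec_of_tuple {t \<in> set residue_tuples. P (vec_of_tuple t)} {v. P v}"
    using bij_betw_vec_of_tuple unfolding bij_betw_def inj_on_def by auto
  then have "card {v. P v} = card {t \<in> set residue_tuples. P (vec_of_tuple t)}"
    by (simp add: bij_betw_same_card)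
  also have "\<dots> = length (filter (\<lambda>t. P (vec_of_tuple t)) residue_tuples)"
    using \<open>distinct residue_tuples\<close> by (simp add: distinct_card[symmetric] set_filter)
  finally show ?thesis .
qed

lemma herm_int_counts:
  "length (filter (\<lambda>t. herm_int t t mod 3 = 2) residue_tuples) = 30"
  "\<forall>s \<in> set residue_tuples. herm_int s s mod 3 = 2 \<longrightarrow>
     length (filter (\<lambda>t. herm_int t t mod 3 = 2 \<and> herm_int s t mod 3 \<noteq> 0) residue_tuples) = 18"
  by code_simp+

lemma of_int_eq_neg_one_3: "(of_int x :: 3) = -1 \<longleftrightarrow> x mod 3 = 2"
  using of_int_eq_iff_mod3[of x "-1"] by simp

lemma of_int_eq_zero_3: "(of_int x :: 3) = 0 \<longleftrightarrow> x mod 3 = 0"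
  using of_int_eq_iff_mod3[of x 0] by simp

lemma card_neg_norm_vecs: "card neg_norm_vecs = 30"
  unfolding neg_norm_vecs_def card_via_residue_tuples herm_red_vec_of_tuple of_int_eq_neg_one_3
  by (rule herm_int_counts(1))

lemma card_non_orthogonal_neg_norm_vecs:
  assumes "b \<in> neg_norm_vecs"
  shows "card {v \<in> neg_norm_vecs. herm_red b v \<noteq> 0} = 18"
proof -
  obtain s where s: "s \<in> set residue_tuples" "b = vec_of_tuple s"
    using bij_betw_vec_of_tuple unfolding bij_betw_def by blast
  have "herm_int s s mod 3 = 2"
    using assms s(2) by (simp add: neg_norm_vecs_def herm_red_vec_of_tuple of_int_eq_neg_one_3)
  then show ?thesis
    using herm_int_counts(2) s
    by (simp add: neg_norm_vecs_def card_via_residue_tuples herm_red_vec_of_tuple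
        of_int_eq_neg_one_3 of_int_eq_zero_3)
qed

section \<open>The sign of \<open>-I\<close> and of hexflections\<close>

lemma uminus_eq_self_3: "- (c :: 3) = c \<longleftrightarrow> c = 0"
proof
  assume "- c = c"
  then have "c + c = 0"
    by (metis add.right_inverse)
  have "c = (2 * 2) * c"
    by simp
  also have "\<dots> = 2 * (c + c)"
    by (metis mult.assoc mult_2)
  finally show "c = 0"
    using \<open>c + c = 0\<close> by simp
qed simp

lemma uminus_mat_one_mult_vec: "(- mat 1) *v v = - (v :: 'a::ring_1^'n)"
  by (simp add: vec_eq_iff matrix_vector_mult_def mat_def if_distrib if_distribR cong: if_cong)

lemma uminus_mat_one: "- mat 1 = (mat (-1) :: 'a::ring_1^'n^'n)"
  by (simp add: vec_eq_iff mat_def)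

lemma sign_red_perm_neg_one: "sign (red_perm (- mat 1)) = -1"
proof -
  have "eis_red_mat (- mat 1 :: complex^4^4) = - mat 1"
    using eis_red_mat_of_int[of "-1"] by (simp add: uminus_mat_one)
  then have "red_perm (- mat 1) = (\<lambda>v. if v \<in> neg_norm_vecs then - v else v)"
    unfolding red_perm_def[abs_def] by (simp only: uminus_mat_one_mult_vec)
  moreover have "{v \<in> neg_norm_vecs. - v \<noteq> v} = neg_norm_vecs"
  proof -
    have "- v \<noteq> v" if "v \<in> neg_norm_vecs" for v
    proof
      assume "- v = v"
      then have "v = 0"
        by (simp add: vec_eq_iff uminus_eq_self_3)
      then show False
        using that by (simp add: neg_norm_vecs_def herm_red_def)
    qed
    then show ?thesis
      by blast
  qed
  moreover have "- v \<in> neg_norm_vecs" if "v \<in> neg_norm_vecs" for v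
    using that by (simp add: neg_norm_vecs_def herm_red_uminus)
  ultimately show ?thesis
    using sign_restricted_involution[of neg_norm_vecs uminus] card_neg_norm_vecs by simp
qed

lemma primitive_sixth_root_cases:
  assumes "primitive_sixth_root \<eta>"
  shows "\<eta> = 1 + zeta3 \<or> \<eta> = - zeta3"
proof -
  have "\<eta> ^ 3 * \<eta> ^ 3 = 1" and "\<eta> ^ 3 \<noteq> 1" and "\<eta> ^ 2 \<noteq> 1"
    using assms unfolding primitive_sixth_root_def by (auto simp flip: power_add)
  then have "\<eta> ^ 3 = -1"
    by (metis minus_one_mult_self power2_eq_square power_one square_eq_1_iff)
  have "\<eta> + 1 \<noteq> 0"
    using \<open>\<eta> ^ 2 \<noteq> 1\<close> by (metis add_eq_0_iff2 power2_minus power_one)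
  have "(\<eta> + 1) * ((\<eta> - (1 + zeta3)) * (\<eta> + zeta3)) = \<eta> ^ 3 + 1"
    by (simp add: algebra_simps zeta3_sq power3_eq_cube)
  then show ?thesis
    using \<open>\<eta> ^ 3 = -1\<close> \<open>\<eta> + 1 \<noteq> 0\<close> by (simp add: eq_neg_iff_add_eq_0)
qed

lemma
  assumes "primitive_sixth_root \<eta>"
  shows Eis_one_minus_sixth_root: "1 - \<eta> \<in> Eis"
    and eis_red_one_minus_sixth_root: "eis_red (1 - \<eta>) = -1"
proof -
  have "1 - \<eta> = of_int 0 + of_int (-1) * zeta3 \<or> 1 - \<eta> = of_int 1 + of_int 1 * zeta3"
    using primitive_sixth_root_cases[OF assms] by auto
  then show "1 - \<eta> \<in> Eis" and "eis_red (1 - \<eta>) = -1"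
    by (auto simp only: EisI eis_red_eq) simp_all
qed

text \<open>As \<open>2 = -1\<close> in \<open>F\<^sub>3\<close>, for \<open>herm_red b b = -1\<close> this is the orthogonal reflection
  \<open>v \<mapsto> v - 2 herm_red b v / herm_red b b \<cdot> b\<close>.\<close>

definition reflection_red :: "3^4 \<Rightarrow> 3^4 \<Rightarrow> 3^4" where
  "reflection_red b v = v - herm_red b v *s b"

lemma reflection_red_involutive:
  assumes "herm_red b b = -1"
  shows "reflection_red b (reflection_red b v) = v"
proof -
  have "reflection_red b (reflection_red b v) = v - (3 * herm_red b v) *s b"
    unfolding reflection_red_def herm_red_diff_scale assms
    by (simp add: vec_eq_iff algebra_simps)
  then show ?thesis
    by simp
qed

lemma reflection_red_eq_self_iff:
  assumes "herm_red b b = -1"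
  shows "reflection_red b v = v \<longleftrightarrow> herm_red b v = 0"
proof
  assume "reflection_red b v = v"
  then have "herm_red b (v - herm_red b v *s b) = herm_red b v"
    unfolding reflection_red_def by simp
  then show "herm_red b v = 0"
    unfolding herm_red_diff_scale assms by simp
qed (simp add: reflection_red_def)

lemma eis_red_mat_hexflection:
  assumes g: "\<forall>i j. g $ i $ j \<in> Eis" and b: "\<forall>i. b $ i \<in> Eis" and "herm b b = -1"
    and \<eta>: "primitive_sixth_root \<eta>"
    and g_apply: "\<forall>x. g *v x = x - ((1 - \<eta>) * herm b x / herm b b) *s b"
  shows "eis_red_mat g *v v = reflection_red (eis_red_vec b) v"
proof -
  obtain x where x: "\<forall>i. x $ i \<in> Eis" and v: "eis_red_vec x = v"
    using eis_red_vec_surj by metis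
  have gx: "(g *v x) $ i = x $ i + (1 - \<eta>) * herm b x * b $ i" for i
    using g_apply \<open>herm b b = -1\<close> by simp
  have "eis_red ((g *v x) $ i) = v $ i - herm_red (eis_red_vec b) v * eis_red_vec b $ i" for i
    unfolding gx v[symmetric] using x b \<eta>
    by (simp add: Eis_add Eis_mult Eis_herm Eis_one_minus_sixth_root eis_red_add eis_red_mult
        eis_red_herm eis_red_one_minus_sixth_root eis_red_vec_def)
  then have "eis_red_vec (g *v x) = reflection_red (eis_red_vec b) v"
    by (simp add: vec_eq_iff eis_red_vec_def reflection_red_def)
  then show ?thesis
    using eis_red_mat_vec[OF g x] v by simp
qed

lemma sign_red_perm_hexflection:
  assumes "g \<in> G3" and "hexflection g"
  shows "sign (red_perm g) = -1"
proof -
  obtain b \<eta> where b: "\<forall>i. b $ i \<in> Eis" and hb: "herm b b = -1" and \<eta>: "primitive_sixth_root \<eta>"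
    and g_apply: "\<forall>x. g *v x = x - ((1 - \<eta>) * herm b x / herm b b) *s b"
    using assms(2) unfolding hexflection_def by blast
  define \<beta> where "\<beta> = eis_red_vec b"
  have "herm_red \<beta> \<beta> = eis_red (herm b b)"
    unfolding \<beta>_def using b by (simp add: eis_red_herm)
  then have \<beta>: "\<beta> \<in> neg_norm_vecs"
    using hb eis_red_of_int[of "-1"] by (simp add: neg_norm_vecs_def)
  have act: "eis_red_mat g *v v = reflection_red \<beta> v" for v
    unfolding \<beta>_def using eis_red_mat_hexflection[OF G3_Eis[OF assms(1)] b hb \<eta> g_apply] .
  have "red_perm g = (\<lambda>v. if v \<in> neg_norm_vecs then reflection_red \<beta> v else v)"
    unfolding red_perm_def[abs_def] act ..
  moreover have "{v \<in> neg_norm_vecs. reflection_red \<beta> v \<noteq> v} = {v \<in> neg_norm_vecs. herm_red \<beta> v \<noteq> 0}"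
    using \<beta> by (simp add: neg_norm_vecs_def reflection_red_eq_self_iff)
  moreover have "reflection_red \<beta> v \<in> neg_norm_vecs \<and> reflection_red \<beta> (reflection_red \<beta> v) = v"
    if "v \<in> neg_norm_vecs" for v
    using G3_maps_neg_norm_vecs[OF assms(1) that] \<beta>
    by (simp add: act neg_norm_vecs_def reflection_red_involutive)
  ultimately show ?thesis
    using sign_restricted_involution[of neg_norm_vecs "reflection_red \<beta>"]
      card_non_orthogonal_neg_norm_vecs[OF \<beta>]
    by simp
qed

theorem lemma8p6:
  shows "\<exists>\<epsilon> :: complex^4^4 \<Rightarrow> int.
           (\<forall>g\<in>G3. \<epsilon> g \<in> {1, -1}) \<and>
           (\<forall>g\<in>G3. \<forall>h\<in>G3. \<epsilon> (g ** h) = \<epsilon> g * \<epsilon> h) \<and>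
           (\<forall>g\<in>G3. hexflection g \<longrightarrow> \<epsilon> g = -1) \<and>
           \<epsilon> (- mat 1) = -1"
proof (intro exI[of _ "\<lambda>g. sign (red_perm g)"] conjI ballI impI)
  show "sign (red_perm g) \<in> {1, -1}" for g
    by (simp add: sign_def)
next
  fix g h
  assume "g \<in> G3" and "h \<in> G3"
  then show "sign (red_perm (g ** h)) = sign (red_perm g) * sign (red_perm h)"
    by (simp add: red_perm_mult sign_compose permutation_red_perm)
qed (simp_all add: sign_red_perm_hexflection sign_red_perm_neg_one)

end
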